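(* Let $X$ be a topological space, $Y$ an infinite completely regular space, and $(g,h)$ a stable pair of Hahn on $X$. Then there exists a separately continuous function $f:X\times Y\to\overline{\mathbb R}$ such that $\min_{y\in Y}f(x,y)=g(x)$ and $\max_{y\in Y}f(x,y)=h(x)$ for every $x\in X$ (in particular $\wedge_f=g$ and $\vee_f=h$).
   Context: Completely regular spaces are assumed $T_1$. $\overline{\mathbb R}=[-\infty,+\infty]$. $\wedge_f(x)=\inf_{y\in Y}f(x,y)$, $\vee_f(x)=\sup_{y\in Y}f(x,y)$. A pair $(g,h)$ of functions $X\to\overline{\mathbb R}$ is a stable pair of Hahn if there are continuous $u_n:X\to\overline{\mathbb R}$ with $g(x)=\min_{n\in\mathbb N}u_n(x)$ and $h(x)=\max_{n\in\mathbb N}u_n(x)$ for all $x\in X$ (attained). $f$ is separately continuous if it is continuous in each variable when the other is fixed. *)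

theory Defs
  imports "HOL-Analysis.Analysis"
begin

definition stable_Hahn_pair :: "'a topology \<Rightarrow> ('a \<Rightarrow> ereal) \<Rightarrow> ('a \<Rightarrow> ereal) \<Rightarrow> bool" where
  "stable_Hahn_pair X g h \<longleftrightarrow>
     (\<exists>u :: nat \<Rightarrow> 'a \<Rightarrow> ereal.
        (\<forall>n. continuous_map X euclidean (u n)) \<and>
        (\<forall>x\<in>topspace X. (\<exists>n. u n x = g x) \<and> (\<forall>n. g x \<le> u n x)) \<and>
        (\<forall>x\<in>topspace X. (\<exists>n. u n x = h x) \<and> (\<forall>n. u n x \<le> h x)))"

definition separately_continuous ::
  "'a topology \<Rightarrow> 'b topology \<Rightarrow> ('a \<Rightarrow> 'b \<Rightarrow> ereal) \<Rightarrow> bool" where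
  "separately_continuous X Y f \<longleftrightarrow>
     (\<forall>x\<in>topspace X. continuous_map Y euclidean (\<lambda>y. f x y)) \<and>
     (\<forall>y\<in>topspace Y. continuous_map X euclidean (\<lambda>x. f x y))"

end

theory Submission
  imports Defs
begin

text \<open>
  An increasing homeomorphism of [-1, 1] onto the extended reals reduces everything to real
  valued continuous u_n with g = min u_n and h = max u_n.

  The maximum side is replaced by a delayed sequence V_n with u_0 \<le> V_n \<le> h that
  still attains h at every point but equals u_0 for all large n: V_n follows the running
  maximum of u_0, ..., u_n only inside a window opened by each of its finitely many jumps.
  Treating the minimum side in the same way and interleaving gives continuous Z_n with
  min Z_n = g, max Z_n = h and Z_n(x) = u_0(x) for all large n.

  An infinite Tychonoff space Y carries continuous bumps \<phi>_n : Y \<rightarrow> [0, 1] with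
  pairwise disjoint supports and \<phi>_n(y_n) = 1. Then
  f(x, y) = u_0(x) + \<Sum>_n \<phi>_n(y) (Z_n(x) - u_0(x)) is a finite sum in y for fixed x
  and has at most one nonzero term for fixed y, so it is separately continuous; it is
  a convex combination of u_0(x) and some Z_n(x), and equals Z_n(x) at y_n.
\<close>

definition ereal_grow :: "real \<Rightarrow> ereal" where
  "ereal_grow t =
     (if 1 \<le> t then \<infinity> else if t \<le> -1 then -\<infinity> else ereal (t / (1 - \<bar>t\<bar>)))"

lemma real_grow_less_iff:
  fixes s t :: real
  assumes "\<bar>s\<bar> < 1" "\<bar>t\<bar> < 1"
  shows "s / (1 - \<bar>s\<bar>) < t / (1 - \<bar>t\<bar>) \<longleftrightarrow> s < t"
  by (metis assms real_shrink_grow real_shrink_lt)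

lemma ereal_grow_real: "\<bar>t\<bar> < 1 \<Longrightarrow> ereal_grow t = ereal (t / (1 - \<bar>t\<bar>))"
  by (simp add: ereal_grow_def abs_less_iff)

lemma ereal_grow_less:
  assumes "-1 \<le> s" "s < t" "t \<le> 1"
  shows "ereal_grow s < ereal_grow t"
proof (cases "s = -1 \<or> t = 1")
  case True
  then show ?thesis
    using assms by (auto simp: ereal_grow_def)
next
  case False
  then have "\<bar>s\<bar> < 1" "\<bar>t\<bar> < 1"
    using assms by linarith+
  then show ?thesis
    using real_grow_less_iff \<open>s < t\<close> by (simp add: ereal_grow_real)
qed

lemma strict_mono_on_ereal_grow: "strict_mono_on {-1..1} ereal_grow"
  by (rule strict_mono_onI) (simp add: ereal_grow_less)

lemma mono_ereal_grow: "mono ereal_grow"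
proof (rule monoI)
  fix s t :: real
  assume "s \<le> t"
  consider "1 \<le> t" | "s \<le> -1" | "s = t" | "-1 \<le> s" "s < t" "t \<le> 1"
    using \<open>s \<le> t\<close> by linarith
  then show "ereal_grow s \<le> ereal_grow t"
  proof cases
    case 4
    then show ?thesis by (simp add: ereal_grow_less order_less_imp_le)
  qed (auto simp: ereal_grow_def)
qed

lemma ereal_grow_image: "ereal_grow ` {-1..1} = UNIV"
proof -
  have "e \<in> ereal_grow ` {-1..1}" for e
  proof (cases e)
    case (real r)
    obtain t where "\<bar>t\<bar> < 1" "t / (1 - \<bar>t\<bar>) = r"
      using real_shrink_Galois[of r "r / (1 + \<bar>r\<bar>)"] by blast
    then have "e = ereal_grow t" "t \<in> {-1..1}"
      using real by (auto simp: ereal_grow_real abs_less_iff)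
    then show ?thesis by blast
  next
    case PInf
    then have "e = ereal_grow 1" by (simp add: ereal_grow_def)
    then show ?thesis by force
  next
    case MInf
    then have "e = ereal_grow (-1)" by (simp add: ereal_grow_def)
    then show ?thesis by force
  qed
  then show ?thesis by blast
qed

lemma continuous_on_ereal_grow: "continuous_on UNIV ereal_grow"
proof (rule continuous_onI_mono)
  have "range ereal_grow = UNIV"
    using ereal_grow_image by blast
  then show "open (range ereal_grow)" by simp
qed (simp add: mono_ereal_grow monoD)

lemma mono_right_inverse:
  fixes S :: "'a::linorder \<Rightarrow> 'b::linorder"
  assumes "mono S" and "\<And>e. S (T e) = e"
  shows "mono T"
  by (metis assms linorder_le_cases monoD monoI order_antisym)

lemma ereal_grow_right_inverse:
  obtains T :: "ereal \<Rightarrow> real"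
  where "continuous_on UNIV T" "mono T" "\<And>e. ereal_grow (T e) = e"
proof -
  obtain T where "homeomorphism {-1..1} UNIV ereal_grow T"
    using homeomorphism_compact[OF compact_Icc continuous_on_subset[OF continuous_on_ereal_grow]
        ereal_grow_image strict_mono_on_imp_inj_on[OF strict_mono_on_ereal_grow]]
    by blast
  then have "continuous_on UNIV T" "\<And>e. ereal_grow (T e) = e"
    by (auto simp: homeomorphism_def)
  with mono_right_inverse[OF mono_ereal_grow] that show ?thesis by blast
qed

definition Hahn_sequence ::
  "'a topology \<Rightarrow> (nat \<Rightarrow> 'a \<Rightarrow> 'b::linorder_topology) \<Rightarrow> ('a \<Rightarrow> 'b) \<Rightarrow> ('a \<Rightarrow> 'b) \<Rightarrow> bool" where
  "Hahn_sequence X u g h \<longleftrightarrow>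
     (\<forall>n. continuous_map X euclidean (u n)) \<and>
     (\<forall>x\<in>topspace X. (\<exists>n. u n x = g x) \<and> (\<forall>n. g x \<le> u n x)) \<and>
     (\<forall>x\<in>topspace X. (\<exists>n. u n x = h x) \<and> (\<forall>n. u n x \<le> h x))"

lemma stable_Hahn_pair_iff_Hahn_sequence:
  "stable_Hahn_pair X g h \<longleftrightarrow> (\<exists>u. Hahn_sequence X u g h)"
  by (simp add: stable_Hahn_pair_def Hahn_sequence_def)

lemma Hahn_sequence_continuous_map: "Hahn_sequence X u g h \<Longrightarrow> continuous_map X euclidean (u n)"
  by (simp add: Hahn_sequence_def)

lemma Hahn_sequenceD:
  assumes "Hahn_sequence X u g h" and "x \<in> topspace X"
  shows "\<exists>k. u k x = g x" "g x \<le> u n x" "\<exists>k. u k x = h x" "u n x \<le> h x"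
  using assms by (auto simp: Hahn_sequence_def)

lemma Hahn_sequence_compose:
  fixes T :: "'b::linorder_topology \<Rightarrow> 'c::linorder_topology"
  assumes "Hahn_sequence X u g h" and "continuous_on UNIV T" and "mono T"
  shows "Hahn_sequence X (\<lambda>n x. T (u n x)) (\<lambda>x. T (g x)) (\<lambda>x. T (h x))"
proof -
  have "continuous_map X euclidean (T \<circ> u n)" for n
    using assms(1,2) by (auto simp: Hahn_sequence_def intro: continuous_map_compose)
  then show ?thesis
    using assms by (auto simp: Hahn_sequence_def comp_def monoD) metis+
qed

fun running_max :: "(nat \<Rightarrow> 'a \<Rightarrow> real) \<Rightarrow> nat \<Rightarrow> 'a \<Rightarrow> real" where
  "running_max U 0 x = U 0 x"
| "running_max U (Suc n) x = max (running_max U n x) (U (Suc n) x)"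

lemma continuous_map_running_max:
  assumes "\<And>n. continuous_map X euclideanreal (U n)"
  shows "continuous_map X euclideanreal (running_max U n)"
proof (induction n)
  case 0
  then show ?case using assms by (simp add: eta_contract_eq)
next
  case (Suc n)
  have "running_max U (Suc n) = (\<lambda>x. max (running_max U n x) (U (Suc n) x))" by auto
  then show ?case using Suc assms by (simp add: continuous_map_real_max)
qed

lemma incseq_running_max: "incseq (\<lambda>n. running_max U n x)"
  by (rule incseq_SucI) simp

lemma running_max_ge: "U n x \<le> running_max U n x"
  by (cases n) auto

lemma running_max_ge_first: "U 0 x \<le> running_max U n x"
  using incseq_running_max[of U x] by (metis incseq_def le0 running_max.simps(1))

lemma running_max_le: "(\<And>k. U k x \<le> c) \<Longrightarrow> running_max U n x \<le> c"
  by (induction n) auto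

lemma running_max_eq_max:
  assumes "U k x = c" and "\<And>j. U j x \<le> c" and "k \<le> n"
  shows "running_max U n x = c"
  using running_max_ge[of U k x] incseq_running_max[of U x] running_max_le[of U x c n] assms
  by (metis incseq_def order_antisym order_trans)

text \<open>max_increment U 0 = 0, since 0 - 1 = 0 on nat.\<close>

definition max_increment :: "(nat \<Rightarrow> 'a \<Rightarrow> real) \<Rightarrow> nat \<Rightarrow> 'a \<Rightarrow> real" where
  "max_increment U j x = running_max U j x - running_max U (j - 1) x"

lemma max_increment_nonneg: "0 \<le> max_increment U j x"
  using incseq_running_max[of U x] by (simp add: max_increment_def incseq_def)

definition trapezoid :: "real \<Rightarrow> real" where
  "trapezoid s = max 0 (min (min s 1) (3 - s))"

lemma trapezoid_bounds: "0 \<le> trapezoid s" "trapezoid s \<le> 1"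
  by (auto simp: trapezoid_def)

lemma trapezoid_eq_0: "s \<le> 0 \<or> 3 \<le> s \<Longrightarrow> trapezoid s = 0"
  by (auto simp: trapezoid_def)

lemma trapezoid_eq_1: "1 \<le> s \<Longrightarrow> s \<le> 2 \<Longrightarrow> trapezoid s = 1"
  by (auto simp: trapezoid_def)

lemma continuous_map_trapezoid:
  "continuous_map X euclideanreal f \<Longrightarrow> continuous_map X euclideanreal (\<lambda>x. trapezoid (f x))"
  unfolding trapezoid_def by (intro continuous_intros) auto

lemma eventually_trapezoid_eq_0:
  assumes "0 \<le> m"
  shows "eventually (\<lambda>n. trapezoid (real (n - j) * m) = 0) sequentially"
proof (cases "m = 0")
  case True
  then show ?thesis by (simp add: trapezoid_eq_0)
next
  case False
  then have "0 < m" using assms by simp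
  have "trapezoid (real (n - j) * m) = 0" if "j + nat \<lceil>3 / m\<rceil> \<le> n" for n
  proof -
    have "3 / m \<le> real (n - j)"
      using that by linarith
    then have "3 \<le> real (n - j) * m"
      using \<open>0 < m\<close> by (simp only: pos_divide_le_eq)
    then show ?thesis
      by (intro trapezoid_eq_0 disjI2)
  qed
  then show ?thesis
    unfolding eventually_sequentially by blast
qed

text \<open>
  A jump of size d > 0 of the running maximum at time j makes the j-th summand equal to 1
  whenever (n - j) min 1 d \<in> [1, 2], in particular after the last jump, when the running
  maximum already is the maximum; the summand vanishes once (n - j) min 1 d \<ge> 3.
\<close>

definition delay_weight :: "(nat \<Rightarrow> 'a \<Rightarrow> real) \<Rightarrow> nat \<Rightarrow> 'a \<Rightarrow> real" where
  "delay_weight U n x = min 1 (\<Sum>j\<le>n. trapezoid (real (n - j) * min 1 (max_increment U j x)))"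

definition delayed_max :: "(nat \<Rightarrow> 'a \<Rightarrow> real) \<Rightarrow> nat \<Rightarrow> 'a \<Rightarrow> real" where
  "delayed_max U n x = U 0 x + delay_weight U n x * (running_max U n x - U 0 x)"

lemma delay_weight_bounds: "0 \<le> delay_weight U n x" "delay_weight U n x \<le> 1"
  by (auto simp: delay_weight_def trapezoid_bounds intro: sum_nonneg)

lemma continuous_map_delay_weight:
  assumes "\<And>n. continuous_map X euclideanreal (U n)"
  shows "continuous_map X euclideanreal (delay_weight U n)"
proof -
  have "continuous_map X euclideanreal (max_increment U j)" for j
    using continuous_map_running_max[OF assms]
    by (simp add: max_increment_def[abs_def] continuous_map_diff)
  then show ?thesis
    unfolding delay_weight_def[abs_def]
    by (intro continuous_map_real_min continuous_map_sum continuous_map_trapezoid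
        continuous_map_real_mult_left) auto
qed

lemma eventually_delay_weight_eq_0:
  assumes "U k x = c" and "\<And>j. U j x \<le> c"
  shows "eventually (\<lambda>n. delay_weight U n x = 0) sequentially"
proof -
  have late: "max_increment U j x = 0" if "k < j" for j
    using running_max_eq_max[of U k x c, OF assms] that
    by (simp add: max_increment_def)
  have "eventually (\<lambda>n. \<forall>j\<in>{..k}. trapezoid (real (n - j) * min 1 (max_increment U j x)) = 0)
      sequentially"
    by (intro eventually_ball_finite ballI eventually_trapezoid_eq_0) (auto simp: max_increment_nonneg)
  then show ?thesis
  proof (rule eventually_mono)
    fix n
    assume "\<forall>j\<in>{..k}. trapezoid (real (n - j) * min 1 (max_increment U j x)) = 0"
    then have "trapezoid (real (n - j) * min 1 (max_increment U j x)) = 0" for j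
      using late[of j] by (cases "j \<le> k") (auto simp: trapezoid_eq_0)
    then show "delay_weight U n x = 0"
      by (simp add: delay_weight_def del: of_nat_diff)
  qed
qed

lemma delay_weight_eq_1:
  assumes "0 < max_increment U N x"
  obtains n where "N \<le> n" and "delay_weight U n x = 1"
proof -
  define m where "m = min 1 (max_increment U N x)"
  define d where "d = nat \<lceil>1 / m\<rceil>"
  have "0 < m" "m \<le> 1"
    using assms by (auto simp: m_def)
  have "real d = real_of_int \<lceil>1 / m\<rceil>"
    using \<open>0 < m\<close> by (simp add: d_def)
  then have "1 / m \<le> real d" "real d \<le> 1 / m + 1"
    using ceiling_correct[of "1 / m"] by linarith+
  then have "1 \<le> real d * m" "real d * m \<le> 2"
    using \<open>0 < m\<close> \<open>m \<le> 1\<close> by (auto simp: field_simps)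
  then have "1 = trapezoid (real (N + d - N) * min 1 (max_increment U N x))"
    by (simp add: trapezoid_eq_1 m_def[symmetric])
  also have "\<dots> \<le> (\<Sum>j\<le>N + d. trapezoid (real (N + d - j) * min 1 (max_increment U j x)))"
    by (rule member_le_sum) (auto simp: trapezoid_bounds)
  finally have "delay_weight U (N + d) x = 1"
    by (simp add: delay_weight_def)
  then show ?thesis
    using that[of "N + d"] by simp
qed

lemma continuous_map_delayed_max:
  assumes "\<And>n. continuous_map X euclideanreal (U n)"
  shows "continuous_map X euclideanreal (delayed_max U n)"
  unfolding delayed_max_def[abs_def]
  by (intro continuous_map_add continuous_map_real_mult continuous_map_diff assms
      continuous_map_delay_weight continuous_map_running_max)

lemma delayed_max_bounds:
  assumes "\<And>j. U j x \<le> c"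
  shows "U 0 x \<le> delayed_max U n x" "delayed_max U n x \<le> c"
proof -
  have "0 \<le> delay_weight U n x * (running_max U n x - U 0 x)"
    by (intro mult_nonneg_nonneg) (simp_all add: delay_weight_bounds running_max_ge_first)
  moreover have "delay_weight U n x * (running_max U n x - U 0 x) \<le> running_max U n x - U 0 x"
    by (rule mult_left_le_one_le) (simp_all add: delay_weight_bounds running_max_ge_first)
  ultimately show "U 0 x \<le> delayed_max U n x" "delayed_max U n x \<le> c"
    using running_max_le[of U x c n] assms by (auto simp: delayed_max_def)
qed

lemma eventually_delayed_max_eq_first:
  assumes "U k x = c" and "\<And>j. U j x \<le> c"
  shows "eventually (\<lambda>n. delayed_max U n x = U 0 x) sequentially"
  using eventually_delay_weight_eq_0[of U k x c, OF assms] by eventually_elim (simp add: delayed_max_def)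

lemma delayed_max_attains_max:
  assumes "U k x = c" and "\<And>j. U j x \<le> c"
  obtains n where "delayed_max U n x = c"
proof (cases "U 0 x = c")
  case True
  then show ?thesis
    using that[of 0] by (simp add: delayed_max_def)
next
  case False
  obtain N where N: "running_max U N x = c" and before: "\<forall>m<N. running_max U m x \<noteq> c"
    using exists_least_iff[of "\<lambda>N. running_max U N x = c"] running_max_eq_max[of U k x c k, OF assms]
    by blast
  have "N \<noteq> 0"
    using N False by (metis running_max.simps(1))
  then have "running_max U (N - 1) x \<noteq> c"
    using before by simp
  moreover have "running_max U (N - 1) x \<le> c"
    using assms(2) by (rule running_max_le)
  ultimately have "running_max U (N - 1) x < c"
    by simp
  then have "0 < max_increment U N x"
    using N by (simp add: max_increment_def)
  then obtain n where "N \<le> n" and weight: "delay_weight U n x = 1"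
    by (rule delay_weight_eq_1)
  have "running_max U n x = c"
    using N \<open>N \<le> n\<close> incseq_running_max[of U x] running_max_le[of U x c n] assms(2)
    by (metis incseq_def order_antisym)
  then show ?thesis
    using that[of n] weight by (simp add: delayed_max_def)
qed

definition delayed_min :: "(nat \<Rightarrow> 'a \<Rightarrow> real) \<Rightarrow> nat \<Rightarrow> 'a \<Rightarrow> real" where
  "delayed_min U n x = - delayed_max (\<lambda>n x. - U n x) n x"

lemma continuous_map_delayed_min:
  assumes "\<And>n. continuous_map X euclideanreal (U n)"
  shows "continuous_map X euclideanreal (delayed_min U n)"
proof -
  have "continuous_map X euclideanreal (\<lambda>x. - U n x)" for n
    by (simp add: assms continuous_map_minus)
  then have "continuous_map X euclideanreal (delayed_max (\<lambda>n x. - U n x) n)"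
    by (rule continuous_map_delayed_max)
  then show ?thesis
    unfolding delayed_min_def[abs_def] by (rule continuous_map_minus)
qed

lemma delayed_min_bounds:
  assumes "\<And>j. c \<le> U j x"
  shows "c \<le> delayed_min U n x" "delayed_min U n x \<le> U 0 x"
  using delayed_max_bounds[of "\<lambda>n x. - U n x" x "- c" n] assms
  by (auto simp: delayed_min_def)

lemma eventually_delayed_min_eq_first:
  assumes "U k x = c" and "\<And>j. c \<le> U j x"
  shows "eventually (\<lambda>n. delayed_min U n x = U 0 x) sequentially"
proof -
  have "eventually (\<lambda>n. delayed_max (\<lambda>n x. - U n x) n x = - U 0 x) sequentially"
    using assms by (intro eventually_delayed_max_eq_first[of _ k]) auto
  then show ?thesis
    by (rule eventually_mono) (simp add: delayed_min_def)
qed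

lemma delayed_min_attains_min:
  assumes "U k x = c" and "\<And>j. c \<le> U j x"
  obtains n where "delayed_min U n x = c"
proof -
  obtain n where "delayed_max (\<lambda>n x. - U n x) n x = - c"
    using delayed_max_attains_max[of "\<lambda>n x. - U n x" k x "- c"] assms by auto
  then show ?thesis
    using that[of n] by (simp add: delayed_min_def)
qed

definition interleave :: "(nat \<Rightarrow> 'a) \<Rightarrow> (nat \<Rightarrow> 'a) \<Rightarrow> nat \<Rightarrow> 'a" where
  "interleave u v n = (if even n then u (n div 2) else v (n div 2))"

lemma interleave_even [simp]: "interleave u v (2 * n) = u n"
  and interleave_odd [simp]: "interleave u v (2 * n + 1) = v n"
  by (simp_all add: interleave_def)

lemma eventually_interleave:
  assumes "eventually (\<lambda>n. P (u n)) sequentially" and "eventually (\<lambda>n. P (v n)) sequentially"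
  shows "eventually (\<lambda>n. P (interleave u v n)) sequentially"
proof -
  obtain N where "\<forall>n\<ge>N. P (u n) \<and> P (v n)"
    using eventually_conj[OF assms] unfolding eventually_sequentially by blast
  then have "\<forall>n\<ge>2 * N. P (interleave u v n)"
    by (auto simp: interleave_def)
  then show ?thesis
    unfolding eventually_sequentially by blast
qed

lemma Hahn_sequence_interleave:
  fixes V W :: "nat \<Rightarrow> 'a \<Rightarrow> 'b::linorder_topology"
  assumes "\<And>n. continuous_map X euclidean (V n)" and "\<And>n. continuous_map X euclidean (W n)"
    and "\<And>x n. x \<in> topspace X \<Longrightarrow> G x \<le> V n x \<and> V n x \<le> H x"
    and "\<And>x n. x \<in> topspace X \<Longrightarrow> G x \<le> W n x \<and> W n x \<le> H x"
    and "\<And>x. x \<in> topspace X \<Longrightarrow> \<exists>n. V n x = H x"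
    and "\<And>x. x \<in> topspace X \<Longrightarrow> \<exists>n. W n x = G x"
  shows "Hahn_sequence X (interleave V W) G H"
proof -
  have cont: "continuous_map X euclidean (interleave V W n)" for n
    using assms(1,2) by (simp add: interleave_def)
  have bounds: "G x \<le> interleave V W n x \<and> interleave V W n x \<le> H x"
    if "x \<in> topspace X" for x n
    using assms(3,4)[OF that] by (simp add: interleave_def)
  have attains: "\<exists>n. interleave V W n x = H x" "\<exists>n. interleave V W n x = G x"
    if "x \<in> topspace X" for x
    using assms(5,6)[OF that] by (metis interleave_even, metis interleave_odd)
  show ?thesis
    unfolding Hahn_sequence_def
    by (intro conjI allI ballI cont attains) (simp_all add: bounds)
qed

lemma Hahn_sequence_delayed_max_min:
  fixes U :: "nat \<Rightarrow> 'a \<Rightarrow> real"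
  assumes "Hahn_sequence X U G H" and x: "x \<in> topspace X"
  shows "G x \<le> delayed_max U n x \<and> delayed_max U n x \<le> H x"
    and "G x \<le> delayed_min U n x \<and> delayed_min U n x \<le> H x"
    and "\<exists>n. delayed_max U n x = H x" and "\<exists>n. delayed_min U n x = G x"
    and "eventually (\<lambda>n. delayed_max U n x = U 0 x) sequentially"
    and "eventually (\<lambda>n. delayed_min U n x = U 0 x) sequentially"
proof -
  obtain k l where "U k x = H x" "U l x = G x"
    using Hahn_sequenceD(1,3)[OF assms] by blast
  note max = this(1) Hahn_sequenceD(4)[OF assms] and min = this(2) Hahn_sequenceD(2)[OF assms]
  show "G x \<le> delayed_max U n x \<and> delayed_max U n x \<le> H x"
    using delayed_max_bounds[of U x "H x" n, OF max(2)] min(2)[of 0] by linarith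
  show "G x \<le> delayed_min U n x \<and> delayed_min U n x \<le> H x"
    using delayed_min_bounds[of "G x" U x n, OF min(2)] max(2)[of 0] by linarith
  show "\<exists>n. delayed_max U n x = H x"
    using delayed_max_attains_max[of U k x "H x", OF max] by blast
  show "\<exists>n. delayed_min U n x = G x"
    using delayed_min_attains_min[of U l x "G x", OF min] by blast
  show "eventually (\<lambda>n. delayed_max U n x = U 0 x) sequentially"
    using max by (rule eventually_delayed_max_eq_first)
  show "eventually (\<lambda>n. delayed_min U n x = U 0 x) sequentially"
    using min by (rule eventually_delayed_min_eq_first)
qed

lemma Hahn_sequence_eventually_first:
  fixes U :: "nat \<Rightarrow> 'a \<Rightarrow> real"
  assumes "Hahn_sequence X U G H"
  obtains Z where "Hahn_sequence X Z G H"
    and "\<And>x. x \<in> topspace X \<Longrightarrow> eventually (\<lambda>n. Z n x = U 0 x) sequentially"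
proof -
  note pointwise = Hahn_sequence_delayed_max_min[OF assms]
  have "Hahn_sequence X (interleave (delayed_max U) (delayed_min U)) G H"
  proof (rule Hahn_sequence_interleave)
    show "continuous_map X euclidean (delayed_max U n)" for n
      using Hahn_sequence_continuous_map[OF assms] by (rule continuous_map_delayed_max)
    show "continuous_map X euclidean (delayed_min U n)" for n
      using Hahn_sequence_continuous_map[OF assms] by (rule continuous_map_delayed_min)
  qed (use pointwise(1-4) in blast)+
  moreover have "eventually (\<lambda>n. interleave (delayed_max U) (delayed_min U) n x = U 0 x) sequentially"
    if "x \<in> topspace X" for x
    using eventually_interleave[of "\<lambda>f. f x = U 0 x" "delayed_max U" "delayed_min U"]
      pointwise(5,6)[OF that]
    by simp
  ultimately show ?thesis
    using that by blast
qed

lemma Hausdorff_space_split_infinite_open: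
  assumes "Hausdorff_space Y" and "openin Y V" and "infinite V"
  obtains W Q where "openin Y W" "openin Y Q" "W \<subseteq> V" "Q \<subseteq> V" "disjnt W Q"
    "infinite W" "Q \<noteq> {}"
proof -
  obtain a where a: "a \<in> V"
    using \<open>infinite V\<close> infinite_imp_nonempty by blast
  have "infinite (V - {a})"
    using \<open>infinite V\<close> by simp
  then obtain b where b: "b \<in> V" "a \<noteq> b"
    using infinite_imp_nonempty by blast
  have "V \<subseteq> topspace Y"
    using \<open>openin Y V\<close> by (rule openin_subset)
  then have "a \<in> topspace Y" "b \<in> topspace Y"
    using a b by auto
  then obtain A B where AB: "openin Y A" "openin Y B" "a \<in> A" "b \<in> B" "disjnt A B"
    using \<open>Hausdorff_space Y\<close> \<open>a \<noteq> b\<close> unfolding Hausdorff_space_def by meson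
  show ?thesis
  proof (cases "finite (A \<inter> V)")
    case True
    have "A \<inter> V \<subseteq> topspace Y"
      using \<open>V \<subseteq> topspace Y\<close> by blast
    then have "closedin Y (A \<inter> V)"
      using True Hausdorff_imp_t1_space[OF \<open>Hausdorff_space Y\<close>]
      by (simp add: t1_space_closedin_finite)
    with \<open>openin Y V\<close> have "openin Y (V - A \<inter> V)"
      by (rule openin_diff)
    moreover have "infinite (V - A \<inter> V)"
      using True \<open>infinite V\<close> by (rule Diff_infinite_finite)
    moreover have "openin Y (A \<inter> V)"
      using AB(1) \<open>openin Y V\<close> by (rule openin_Int)
    ultimately show ?thesis
      using a AB(3) by (intro that[of "V - A \<inter> V" "A \<inter> V"]) (auto simp: disjnt_def)
  next
    case False
    have "openin Y (A \<inter> V)" "openin Y (B \<inter> V)"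
      using AB(1,2) \<open>openin Y V\<close> by (simp_all add: openin_Int)
    moreover have "disjnt (A \<inter> V) (B \<inter> V)"
      using AB(5) by (auto simp: disjnt_def)
    ultimately show ?thesis
      using False b AB(4) by (intro that[of "A \<inter> V" "B \<inter> V"]) auto
  qed
qed

lemma disjoint_family_decseq_pieces:
  assumes "decseq R" and "\<And>n. P n \<subseteq> R n" and "\<And>n. disjnt (R (Suc n)) (P n)"
  shows "disjoint_family P"
proof -
  have "disjnt (P m) (P n)" if "m < n" for m n
  proof -
    have "P n \<subseteq> R (Suc m)"
      using assms(2)[of n] decseqD[OF assms(1), of "Suc m" n] \<open>m < n\<close> by auto
    then show ?thesis
      using assms(3)[of m] by (auto simp: disjnt_def)
  qed
  then show ?thesis
    unfolding disjoint_family_on_def disjnt_def by (metis Int_commute linorder_neq_iff)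
qed

lemma Hausdorff_space_infinite_disjoint_family:
  assumes "Hausdorff_space Y" and "infinite (topspace Y)"
  obtains S :: "nat \<Rightarrow> 'a set"
  where "\<And>n. openin Y (S n)" "\<And>n. S n \<noteq> {}" "disjoint_family S"
proof -
  define good where "good V \<longleftrightarrow> openin Y V \<and> infinite V" for V
  define splits where "splits V W Q \<longleftrightarrow>
      good W \<and> openin Y Q \<and> W \<subseteq> V \<and> Q \<subseteq> V \<and> disjnt W Q \<and> Q \<noteq> {}" for V W Q
  have "\<exists>W Q. splits V W Q" if "good V" for V
  proof -
    have "openin Y V" "infinite V"
      using that by (simp_all add: good_def)
    then obtain W Q where "openin Y W" "openin Y Q" "W \<subseteq> V" "Q \<subseteq> V" "disjnt W Q"
      "infinite W" "Q \<noteq> {}"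
      using Hausdorff_space_split_infinite_open[OF assms(1)] by metis
    then show ?thesis
      unfolding splits_def good_def by blast
  qed
  then obtain rest piece where split: "\<And>V. good V \<Longrightarrow> splits V (rest V) (piece V)"
    by metis
  define R where "R n = (rest ^^ n) (topspace Y)" for n
  have R_Suc: "R (Suc n) = rest (R n)" for n
    by (simp add: R_def)
  have good: "good (R n)" for n
  proof (induction n)
    case 0
    then show ?case using assms by (simp add: R_def good_def)
  next
    case (Suc n)
    then show ?case using split by (simp add: R_Suc splits_def)
  qed
  have piece: "openin Y (piece (R n))" "piece (R n) \<noteq> {}" "piece (R n) \<subseteq> R n"
    "disjnt (R (Suc n)) (piece (R n))" for n
    using split[OF good] by (simp_all add: R_Suc splits_def)
  have "decseq R"
    using split[OF good] by (intro decseq_SucI) (simp add: R_Suc splits_def)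
  then have "disjoint_family (\<lambda>n. piece (R n))"
    using piece(3,4) by (rule disjoint_family_decseq_pieces)
  then show ?thesis
    by (intro that[of "\<lambda>n. piece (R n)"] piece(1,2))
qed

lemma completely_regular_space_bump:
  assumes "completely_regular_space Y" and "openin Y S" and "y \<in> S"
  shows "\<exists>\<phi> :: 'a \<Rightarrow> real. continuous_map Y euclideanreal \<phi> \<and> (\<forall>z. \<phi> z \<in> {0..1}) \<and>
    \<phi> y = 1 \<and> (\<forall>z\<in>topspace Y - S. \<phi> z = 0)"
proof -
  have "\<exists>f :: 'a \<Rightarrow> real. continuous_map Y euclideanreal f \<and> f y = 1 \<and> f ` (topspace Y - S) \<subseteq> {0}"
    using assms completely_regular_space_gen_alt'[of 1 0 Y] by simp
  then obtain f :: "'a \<Rightarrow> real" where f: "continuous_map Y euclideanreal f" "f y = 1"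
    "f ` (topspace Y - S) \<subseteq> {0}"
    by blast
  have "continuous_map Y euclideanreal (\<lambda>z. max 0 (min 1 (f z)))"
    using f(1) by (intro continuous_map_real_max continuous_map_real_min) auto
  then show ?thesis
    using f(2,3) by (intro exI[of _ "\<lambda>z. max 0 (min 1 (f z))"]) auto
qed

lemma completely_regular_space_bump_sequence:
  assumes "completely_regular_space Y" and "Hausdorff_space Y" and "infinite (topspace Y)"
  obtains y :: "nat \<Rightarrow> 'a" and \<phi> :: "nat \<Rightarrow> 'a \<Rightarrow> real"
  where "\<And>n. y n \<in> topspace Y" "\<And>n. continuous_map Y euclideanreal (\<phi> n)"
    "\<And>n z. \<phi> n z \<in> {0..1}" "\<And>n. \<phi> n (y n) = 1"
    "\<And>z. z \<in> topspace Y \<Longrightarrow> \<exists>m. \<forall>n. n \<noteq> m \<longrightarrow> \<phi> n z = 0"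
proof -
  obtain S :: "nat \<Rightarrow> 'a set" where S: "\<And>n. openin Y (S n)" "\<And>n. S n \<noteq> {}" "disjoint_family S"
    using Hausdorff_space_infinite_disjoint_family[OF assms(2,3)] by blast
  have "\<forall>n. \<exists>z. z \<in> S n"
    using S(2) by blast
  then obtain y where y: "\<And>n. y n \<in> S n"
    using choice by metis
  have "\<forall>n. \<exists>\<phi>. continuous_map Y euclideanreal \<phi> \<and> (\<forall>z. \<phi> z \<in> {0..1}) \<and>
      \<phi> (y n) = 1 \<and> (\<forall>z\<in>topspace Y - S n. \<phi> z = 0)"
    using completely_regular_space_bump[OF assms(1) S(1) y] by blast
  then obtain \<phi> where "\<forall>n. continuous_map Y euclideanreal (\<phi> n) \<and> (\<forall>z. \<phi> n z \<in> {0..1}) \<and>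
      \<phi> n (y n) = 1 \<and> (\<forall>z\<in>topspace Y - S n. \<phi> n z = 0)"
    by (metis choice)
  then have \<phi>: "\<And>n. continuous_map Y euclideanreal (\<phi> n)" "\<And>n z. \<phi> n z \<in> {0..1}"
    "\<And>n. \<phi> n (y n) = 1" "\<And>n z. z \<in> topspace Y - S n \<Longrightarrow> \<phi> n z = 0"
    by simp_all
  have "\<exists>m. \<forall>n. n \<noteq> m \<longrightarrow> \<phi> n z = 0" if z: "z \<in> topspace Y" for z
  proof (cases "\<exists>m. z \<in> S m")
    case True
    then obtain m where "z \<in> S m" ..
    then have "z \<notin> S n" if "n \<noteq> m" for n
      using S(3) that unfolding disjoint_family_on_def by blast
    then show ?thesis
      using \<phi>(4) z by blast
  next
    case False
    then show ?thesis
      using \<phi>(4) z by blast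
  qed
  moreover have "y n \<in> topspace Y" for n
    using y S(1) openin_subset by blast
  ultimately show ?thesis
    using \<phi> by (intro that)
qed

definition bump_sum ::
  "('a \<Rightarrow> real) \<Rightarrow> (nat \<Rightarrow> 'a \<Rightarrow> real) \<Rightarrow> (nat \<Rightarrow> 'b \<Rightarrow> real) \<Rightarrow> 'a \<Rightarrow> 'b \<Rightarrow> real" where
  "bump_sum c Z \<phi> x z = c x + (\<Sum>n. \<phi> n z * (Z n x - c x))"

lemma bump_sum_single:
  assumes "\<And>n. n \<noteq> m \<Longrightarrow> \<phi> n z = 0"
  shows "bump_sum c Z \<phi> x z = c x + \<phi> m z * (Z m x - c x)"
proof -
  have "(\<Sum>n. \<phi> n z * (Z n x - c x)) = (\<Sum>n\<in>{m}. \<phi> n z * (Z n x - c x))"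
    by (rule suminf_finite) (use assms in auto)
  then show ?thesis
    by (simp add: bump_sum_def)
qed

lemma bump_sum_finite:
  assumes "\<And>n. N \<le> n \<Longrightarrow> Z n x = c x"
  shows "bump_sum c Z \<phi> x = (\<lambda>z. c x + (\<Sum>n<N. \<phi> n z * (Z n x - c x)))"
proof
  fix z
  have "(\<Sum>n. \<phi> n z * (Z n x - c x)) = (\<Sum>n<N. \<phi> n z * (Z n x - c x))"
    by (rule suminf_finite) (use assms in auto)
  then show "bump_sum c Z \<phi> x z = c x + (\<Sum>n<N. \<phi> n z * (Z n x - c x))"
    by (simp add: bump_sum_def)
qed

lemma continuous_map_bump_sum_left:
  assumes "continuous_map X euclideanreal c" and "\<And>n. continuous_map X euclideanreal (Z n)"
    and "\<And>n. n \<noteq> m \<Longrightarrow> \<phi> n z = 0"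
  shows "continuous_map X euclideanreal (\<lambda>x. bump_sum c Z \<phi> x z)"
proof -
  have "bump_sum c Z \<phi> x z = c x + \<phi> m z * (Z m x - c x)" for x
    by (rule bump_sum_single) (rule assms(3))
  then show ?thesis
    by (simp only:) (intro continuous_map_add continuous_map_real_mult_left continuous_map_diff assms(1,2))
qed

lemma continuous_map_bump_sum_right:
  assumes "\<And>n. continuous_map Y euclideanreal (\<phi> n)"
    and "eventually (\<lambda>n. Z n x = c x) sequentially"
  shows "continuous_map Y euclideanreal (bump_sum c Z \<phi> x)"
proof -
  obtain N where "\<And>n. N \<le> n \<Longrightarrow> Z n x = c x"
    using assms(2) unfolding eventually_sequentially by blast
  then have "bump_sum c Z \<phi> x = (\<lambda>z. c x + (\<Sum>n<N. \<phi> n z * (Z n x - c x)))"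
    by (rule bump_sum_finite)
  then show ?thesis
    by (simp only:) (intro continuous_map_add continuous_map_sum continuous_map_real_mult_right assms(1); simp)
qed

definition extrema_attained ::
  "'a topology \<Rightarrow> 'b topology \<Rightarrow> ('a \<Rightarrow> 'b \<Rightarrow> 'c::linorder) \<Rightarrow> ('a \<Rightarrow> 'c) \<Rightarrow> ('a \<Rightarrow> 'c) \<Rightarrow> bool" where
  "extrema_attained X Y f g h \<longleftrightarrow>
     (\<forall>x\<in>topspace X.
        (\<exists>y\<in>topspace Y. f x y = g x) \<and> (\<forall>y\<in>topspace Y. g x \<le> f x y) \<and>
        (\<exists>y\<in>topspace Y. f x y = h x) \<and> (\<forall>y\<in>topspace Y. f x y \<le> h x))"

lemma extrema_attained_compose:
  assumes "extrema_attained X Y f g h" and "mono S"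
  shows "extrema_attained X Y (\<lambda>x y. S (f x y)) (\<lambda>x. S (g x)) (\<lambda>x. S (h x))"
  using assms by (auto simp: extrema_attained_def monoD) metis+

lemma bump_sum_between:
  assumes "\<phi> m z \<in> {0..1}" and "\<And>n. n \<noteq> m \<Longrightarrow> \<phi> n z = 0"
    and "L \<le> c x" "c x \<le> R" "L \<le> Z m x" "Z m x \<le> R"
  shows "L \<le> bump_sum c Z \<phi> x z \<and> bump_sum c Z \<phi> x z \<le> R"
proof -
  let ?t = "\<phi> m z"
  have t: "0 \<le> ?t" "0 \<le> 1 - ?t"
    using assms(1) by auto
  have "bump_sum c Z \<phi> x z = c x + ?t * (Z m x - c x)"
    by (rule bump_sum_single) (rule assms(2))
  also have "\<dots> = (1 - ?t) * c x + ?t * Z m x"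
    by (simp add: algebra_simps)
  finally have eq: "bump_sum c Z \<phi> x z = (1 - ?t) * c x + ?t * Z m x" .
  have "(1 - ?t) * L + ?t * L \<le> (1 - ?t) * c x + ?t * Z m x"
    using t assms(3,5) by (intro add_mono mult_left_mono)
  moreover have "(1 - ?t) * c x + ?t * Z m x \<le> (1 - ?t) * R + ?t * R"
    using t assms(4,6) by (intro add_mono mult_left_mono)
  ultimately show ?thesis
    unfolding eq by (simp add: algebra_simps)
qed

lemma bump_sum_at_peak:
  assumes "\<phi> m z = 1" and "\<And>n. n \<noteq> m \<Longrightarrow> \<phi> n z = 0"
  shows "bump_sum c Z \<phi> x z = Z m x"
proof -
  have "bump_sum c Z \<phi> x z = c x + \<phi> m z * (Z m x - c x)"
    by (rule bump_sum_single) (rule assms(2))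
  with assms(1) show ?thesis
    by simp
qed

lemma extrema_attained_bump_sum:
  fixes Z :: "nat \<Rightarrow> 'a \<Rightarrow> real" and \<phi> :: "nat \<Rightarrow> 'b \<Rightarrow> real"
  assumes Z: "Hahn_sequence X Z G H"
    and ev: "\<And>x. x \<in> topspace X \<Longrightarrow> eventually (\<lambda>n. Z n x = c x) sequentially"
    and y: "\<And>n. y n \<in> topspace Y" and \<phi>: "\<And>n z. \<phi> n z \<in> {0..1}" "\<And>n. \<phi> n (y n) = 1"
    and single: "\<And>z. z \<in> topspace Y \<Longrightarrow> \<exists>m. \<forall>n. n \<noteq> m \<longrightarrow> \<phi> n z = 0"
  shows "extrema_attained X Y (bump_sum c Z \<phi>) G H"
proof -
  have peak: "bump_sum c Z \<phi> x (y m) = Z m x" for x m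
  proof -
    obtain k where k: "\<forall>n. n \<noteq> k \<longrightarrow> \<phi> n (y m) = 0"
      using single[OF y] by blast
    then have "k = m"
      using \<phi>(2)[of m] by force
    with k show ?thesis
      by (intro bump_sum_at_peak) (simp_all add: \<phi>(2))
  qed
  have between: "G x \<le> bump_sum c Z \<phi> x z \<and> bump_sum c Z \<phi> x z \<le> H x"
    if x: "x \<in> topspace X" and z: "z \<in> topspace Y" for x z
  proof -
    obtain N where "Z N x = c x"
      using ev[OF x] unfolding eventually_sequentially by blast
    then have "G x \<le> c x" "c x \<le> H x"
      using Hahn_sequenceD(2,4)[OF Z x, of N] by simp_all
    moreover obtain m where m: "\<And>n. n \<noteq> m \<Longrightarrow> \<phi> n z = 0"
      using single[OF z] by blast
    ultimately show ?thesis
      by (rule_tac bump_sum_between[where m = m])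
        (use \<phi>(1) m Hahn_sequenceD(2,4)[OF Z x, of m] in auto)
  qed
  show ?thesis
    unfolding extrema_attained_def
    using between Hahn_sequenceD(1,3)[OF Z] peak y by metis
qed

lemma Hahn_sequence_separately_continuous_real:
  fixes U :: "nat \<Rightarrow> 'a \<Rightarrow> real" and Y :: "'b topology"
  assumes "Hahn_sequence X U G H"
    and "completely_regular_space Y" and "Hausdorff_space Y" and "infinite (topspace Y)"
  shows "\<exists>F :: 'a \<Rightarrow> 'b \<Rightarrow> real.
    (\<forall>x\<in>topspace X. continuous_map Y euclideanreal (F x)) \<and>
    (\<forall>y\<in>topspace Y. continuous_map X euclideanreal (\<lambda>x. F x y)) \<and>
    extrema_attained X Y F G H"
proof -
  obtain Z :: "nat \<Rightarrow> 'a \<Rightarrow> real" where Z: "Hahn_sequence X Z G H"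
    and ev: "\<And>x. x \<in> topspace X \<Longrightarrow> eventually (\<lambda>n. Z n x = U 0 x) sequentially"
    using Hahn_sequence_eventually_first[OF assms(1)] by blast
  obtain y :: "nat \<Rightarrow> 'b" and \<phi> :: "nat \<Rightarrow> 'b \<Rightarrow> real"
    where y: "\<And>n. y n \<in> topspace Y" and \<phi>: "\<And>n. continuous_map Y euclideanreal (\<phi> n)"
      "\<And>n z. \<phi> n z \<in> {0..1}" "\<And>n. \<phi> n (y n) = 1"
      "\<And>z. z \<in> topspace Y \<Longrightarrow> \<exists>m. \<forall>n. n \<noteq> m \<longrightarrow> \<phi> n z = 0"
    using completely_regular_space_bump_sequence[OF assms(2-4)] by blast
  have "continuous_map Y euclideanreal (bump_sum (U 0) Z \<phi> x)" if "x \<in> topspace X" for x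
    using \<phi>(1) ev[OF that] by (rule continuous_map_bump_sum_right)
  moreover have "continuous_map X euclideanreal (\<lambda>x. bump_sum (U 0) Z \<phi> x z)"
    if z: "z \<in> topspace Y" for z
  proof -
    obtain m where "\<And>n. n \<noteq> m \<Longrightarrow> \<phi> n z = 0"
      using \<phi>(4)[OF z] by blast
    then show ?thesis
      by (rule continuous_map_bump_sum_left[OF Hahn_sequence_continuous_map[OF assms(1)]
            Hahn_sequence_continuous_map[OF Z]])
  qed
  moreover have "extrema_attained X Y (bump_sum (U 0) Z \<phi>) G H"
    using Z ev y \<phi>(2-4) by (rule extrema_attained_bump_sum)
  ultimately show ?thesis
    by blast
qed

lemma separately_continuous_compose:
  fixes F :: "'a \<Rightarrow> 'b \<Rightarrow> real" and S :: "real \<Rightarrow> ereal"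
  assumes "\<forall>x\<in>topspace X. continuous_map Y euclideanreal (F x)"
    and "\<forall>y\<in>topspace Y. continuous_map X euclideanreal (\<lambda>x. F x y)"
    and "continuous_on UNIV S"
  shows "separately_continuous X Y (\<lambda>x y. S (F x y))"
proof -
  have S_cont: "continuous_map euclideanreal euclidean S"
    using assms(3) by simp
  have S: "continuous_map Z euclidean (\<lambda>z. S (f z))"
    if "continuous_map Z euclideanreal f" for Z :: "'c topology" and f
    using continuous_map_compose[OF that S_cont] by (simp add: comp_def)
  show ?thesis
    using assms(1,2) by (auto simp: separately_continuous_def intro!: S)
qed

theorem theorem8p1:
  fixes X :: "'a topology" and Y :: "'b topology" and g h :: "'a \<Rightarrow> ereal"
  assumes "completely_regular_space Y" and "t1_space Y"
    and "infinite (topspace Y)"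
    and "stable_Hahn_pair X g h"
  shows "\<exists>f :: 'a \<Rightarrow> 'b \<Rightarrow> ereal. separately_continuous X Y f \<and>
           (\<forall>x\<in>topspace X.
              (\<exists>y\<in>topspace Y. f x y = g x) \<and> (\<forall>y\<in>topspace Y. g x \<le> f x y) \<and>
              (\<exists>y\<in>topspace Y. f x y = h x) \<and> (\<forall>y\<in>topspace Y. f x y \<le> h x))"
proof -
  obtain T where T: "continuous_on UNIV T" "mono T" "\<And>e. ereal_grow (T e) = e"
    using ereal_grow_right_inverse by blast
  obtain u where "Hahn_sequence X u g h"
    using assms(4) stable_Hahn_pair_iff_Hahn_sequence by blast
  then have "Hahn_sequence X (\<lambda>n x. T (u n x)) (\<lambda>x. T (g x)) (\<lambda>x. T (h x))"
    using T(1,2) by (rule Hahn_sequence_compose)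
  moreover have "Hausdorff_space Y"
    using assms(1,2) completely_regular_imp_regular_space regular_t1_imp_Hausdorff_space by blast
  ultimately obtain F :: "'a \<Rightarrow> 'b \<Rightarrow> real"
    where "\<forall>x\<in>topspace X. continuous_map Y euclideanreal (F x)"
      and "\<forall>y\<in>topspace Y. continuous_map X euclideanreal (\<lambda>x. F x y)"
      and extrema: "extrema_attained X Y F (\<lambda>x. T (g x)) (\<lambda>x. T (h x))"
    using Hahn_sequence_separately_continuous_real assms(1,3) by blast
  then have "separately_continuous X Y (\<lambda>x y. ereal_grow (F x y))"
    using continuous_on_ereal_grow by (intro separately_continuous_compose)
  moreover have "extrema_attained X Y (\<lambda>x y. ereal_grow (F x y)) g h"
    using extrema_attained_compose[OF extrema mono_ereal_grow] by (simp add: T(3))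
  ultimately show ?thesis
    unfolding extrema_attained_def by blast
qed

end
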